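(* Let $m,n\in\mathbb{N}$ and let $s_{j,\ell}\in\mathbb{C}$ with $\Re(s_{j,\ell})>0$ for $1\le j\le n$, $1\le\ell\le m$. Then the $n\times n$ matrix \[ \left(\prod_{\ell=1}^{m}\left(1-2^{1-s_{j,\ell}-\overline{s_{k,\ell}}}\right)\Gamma(s_{j,\ell}+\overline{s_{k,\ell}}+1)\zeta(s_{j,\ell}+\overline{s_{k,\ell}})\right)_{j,k=1}^{n} \] is positive semidefinite.
   Context: $\Gamma$ is Euler's Gamma function and $\zeta$ the Riemann zeta function; the product $(1-2^{1-s})\zeta(s)$ is understood as the entire function it defines (the singularity at $s=1$ is removable). A complex matrix $A=(a_{j,k})$ is positive semidefinite if $\sum_{j,k}a_{j,k}z_j\overline{z_k}\ge0$ for all complex $z_j$. *)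

theory Defs
  imports "HOL-Analysis.Analysis" "HOL-Library.Complex_Order"
begin

text \<open>Riemann zeta function on its half-plane of absolute convergence Re s > 1.\<close>
definition zeta_series :: "complex \<Rightarrow> complex" where
  "zeta_series s = (\<Sum>n. 1 / (of_nat (Suc n)) powr s)"

text \<open>The entire function defined by (1 - 2^(1-s)) zeta(s): the unique entire function
  agreeing with (1 - 2^(1-s)) zeta(s) on Re s > 1 (analytic continuation; the
  singularity at s = 1 is removable).\<close>
definition factor_zeta :: "complex \<Rightarrow> complex" where
  "factor_zeta = (THE f. f holomorphic_on UNIV \<and>
      (\<forall>s. 1 < Re s \<longrightarrow> f s = (1 - 2 powr (1 - s)) * zeta_series s))"

definition psd_matrix :: "nat \<Rightarrow> (nat \<Rightarrow> nat \<Rightarrow> complex) \<Rightarrow> bool" where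
  "psd_matrix n a \<longleftrightarrow>
     (\<forall>z :: nat \<Rightarrow> complex. (\<Sum>j=1..n. \<Sum>k=1..n. a j k * z j * cnj (z k)) \<ge> 0)"

end

theory Submission
  imports Defs "HOL-Complex_Analysis.Complex_Analysis"
begin

text \<open>For Re u > 0 the kernel K(u) = (1 - 2^(1-u)) \<zeta>(u) \<Gamma>(u+1) is the Mellin transform
  \<integral>_0^\<infinity> x^u w(x) dx of the positive weight
  w(x) = e^(-x) / (1 + e^(-x))^2 = \<Sum>(-1)^n (n+1) e^(-(n+1)x):
  integrating termwise against \<integral>_0^\<infinity> x^u e^(-cx) dx = \<Gamma>(u+1) c^(-u-1) leaves the
  alternating series \<Sum>(-1)^n (n+1)^(-u), which converges to (1 - 2^(1-u)) \<zeta>(u) for Re u > 0.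
  Hence K(s_j + cnj s_k) = \<integral> x^(s_j) cnj (x^(s_k)) w(x) dx, and multiplying a positive
  semidefinite matrix entrywise by such an integral keeps it positive semidefinite, because for
  every fixed x the integrand is a positive semidefinite form; induction over the factors gives
  the theorem. The entire function (1 - 2^(1-s)) \<zeta>(s) itself is obtained from the alternating
  series by repeated Euler transforms, the N-th of which converges for Re s > 1 - N.\<close>

fun iter_diff :: "nat \<Rightarrow> ('a::{plus,one} \<Rightarrow> 'b::minus) \<Rightarrow> 'a \<Rightarrow> 'b" where
  "iter_diff 0 f x = f x"
| "iter_diff (Suc k) f x = iter_diff k f x - iter_diff k f (x + 1)"

lemma iter_diff_cmult:
  fixes f :: "'a::{plus,one} \<Rightarrow> 'b::ring"
  shows "iter_diff k (\<lambda>x. c * f x) x = c * iter_diff k f x"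
  by (induction k arbitrary: x) (auto simp: algebra_simps)

lemma has_field_derivative_iter_diff:
  assumes "\<And>y. Re y > 0 \<Longrightarrow> (f has_field_derivative f' y) (at y)" and "Re x > 0"
  shows "(iter_diff k f has_field_derivative iter_diff k f' x) (at x)"
  using assms(2)
proof (induction k arbitrary: x)
  case 0
  then show ?case using assms(1) by simp
next
  case (Suc k)
  have "(iter_diff k f has_field_derivative iter_diff k f' (x + 1)) (at (x + 1))"
    using Suc by simp
  then have "((\<lambda>x. iter_diff k f (x + 1)) has_field_derivative iter_diff k f' (x + 1)) (at x)"
    using DERIV_shift by blast
  from DERIV_diff[OF Suc.IH[OF Suc.prems] this]
  show ?case by (simp add: fun_eq_iff)
qed

lemma has_field_derivative_iter_diff_param:
  assumes "\<And>y. Re y > 0 \<Longrightarrow> ((\<lambda>s. g s y) has_field_derivative g' y) (at s)" and "Re x > 0"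
  shows "((\<lambda>s. iter_diff k (g s) x) has_field_derivative iter_diff k g' x) (at s)"
  using assms(2)
proof (induction k arbitrary: x)
  case 0
  then show ?case using assms(1) by simp
next
  case (Suc k)
  have "Re (x + 1) > 0" using Suc.prems by simp
  from DERIV_diff[OF Suc.IH[OF Suc.prems] Suc.IH[OF this]] show ?case by simp
qed

text \<open>Each difference step is a mean value inequality on [x, x+1]: the derivative of the k-th
  difference of y^c is c times the k-th difference of y^(c-1).\<close>
lemma norm_iter_diff_powr_le:
  fixes x :: real
  assumes "x \<ge> 1" "Re c \<le> real k"
  shows "norm (iter_diff k (\<lambda>y. y powr c) (of_real x))
           \<le> (\<Prod>i<k. norm (c - of_nat i)) * x powr (Re c - real k)"
  using assms
proof (induction k arbitrary: c x)
  case 0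
  then show ?case by (simp add: norm_powr_real_powr)
next
  case (Suc k)
  let ?h = "iter_diff k (\<lambda>y. y powr c)"
  let ?B = "norm c * (\<Prod>i<k. norm (c - 1 - of_nat i)) * x powr (Re c - 1 - real k)"
  define S where "S = complex_of_real ` {x..x+1}"
  have "convex S" unfolding S_def
    by (rule convex_linear_image) (auto intro: linear_of_real)
  moreover have "(?h has_field_derivative c * iter_diff k (\<lambda>y. y powr (c - 1)) z) (at z within S)"
    if "z \<in> S" for z
  proof -
    have "Re z > 0" using that Suc.prems unfolding S_def by auto
    then have "(?h has_field_derivative iter_diff k (\<lambda>y. c * y powr (c - 1)) z) (at z)"
      by (intro has_field_derivative_iter_diff has_field_derivative_powr)
         (auto simp: complex_nonpos_Reals_iff)
    then show ?thesis by (simp add: iter_diff_cmult has_field_derivative_at_within)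
  qed
  moreover have "norm (c * iter_diff k (\<lambda>y. y powr (c - 1)) z) \<le> ?B" if "z \<in> S" for z
  proof -
    obtain t where t: "z = of_real t" "x \<le> t" "t \<le> x + 1" using \<open>z \<in> S\<close> unfolding S_def by auto
    have "norm (iter_diff k (\<lambda>y. y powr (c - 1)) (of_real t))
          \<le> (\<Prod>i<k. norm (c - 1 - of_nat i)) * t powr (Re (c - 1) - real k)"
      using Suc.IH[of t "c - 1"] Suc.prems t by auto
    also have "\<dots> \<le> (\<Prod>i<k. norm (c - 1 - of_nat i)) * x powr (Re c - 1 - real k)"
      using Suc.prems t by (intro mult_left_mono) (auto intro!: powr_mono2' prod_nonneg)
    finally show ?thesis using t by (simp add: norm_mult mult.assoc mult_left_mono)
  qed
  ultimately have "norm (?h (of_real x) - ?h (of_real x + 1))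
                     \<le> ?B * norm (of_real x - (of_real x + 1) :: complex)"
    by (rule field_differentiable_bound) (auto simp: S_def intro!: image_eqI[where x="x+1"])
  then have "norm (iter_diff (Suc k) (\<lambda>y. y powr c) (of_real x)) \<le> ?B" by simp
  also have "?B = (\<Prod>i<Suc k. norm (c - of_nat i)) * x powr (Re c - real (Suc k))"
    by (subst prod.lessThan_Suc_shift) (simp add: algebra_simps del: prod.lessThan_Suc)
  finally show ?case .
qed

lemma summable_real_Suc_powr:
  assumes "a < -1"
  shows "summable (\<lambda>n. real (Suc n) powr a)"
  using summable_real_powr_iff[of a] summable_Suc_iff[of "\<lambda>n. real n powr a"] assms by simp

definition euler_term :: "nat \<Rightarrow> complex \<Rightarrow> nat \<Rightarrow> complex" where
  "euler_term N s n = (-1)^n * iter_diff N (\<lambda>x. x powr (-s)) (of_nat (Suc n))"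

text \<open>The N-fold Euler transform of \<Sum>(-1)^n (n+1)^(-s); by the bound on iterated differences
  its remaining series has terms of size n^(-Re s - N).\<close>
definition eta_euler :: "nat \<Rightarrow> complex \<Rightarrow> complex" where
  "eta_euler N s = (\<Sum>k<N. (1/2)^(Suc k) * iter_diff k (\<lambda>x. x powr (-s)) 1)
                   + (1/2)^N * (\<Sum>n. euler_term N s n)"

lemma norm_euler_term_le:
  assumes "- Re s \<le> real N"
  shows "norm (euler_term N s n)
           \<le> (\<Prod>i<N. norm (- s - of_nat i)) * real (Suc n) powr (- Re s - real N)"
proof -
  have "norm (iter_diff N (\<lambda>x. x powr (-s)) (of_real (real (Suc n))))
        \<le> (\<Prod>i<N. norm (- s - of_nat i)) * real (Suc n) powr (Re (-s) - real N)"
    by (rule norm_iter_diff_powr_le) (use assms in auto)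
  then show ?thesis unfolding euler_term_def by (simp add: norm_mult norm_power)
qed

lemma summable_norm_euler_term:
  assumes "Re s > 1 - real N"
  shows "summable (\<lambda>n. norm (euler_term N s n))"
proof (rule summable_comparison_test[OF _ summable_mult[OF summable_real_Suc_powr]])
  show "- Re s - real N < -1" using assms by simp
  show "\<exists>N'. \<forall>n\<ge>N'. norm (norm (euler_term N s n))
          \<le> (\<Prod>i<N. norm (- s - of_nat i)) * real (Suc n) powr (- Re s - real N)"
    using norm_euler_term_le[of s N] assms by auto
qed

lemma sums_alternating_diff:
  fixes b :: "nat \<Rightarrow> 'a::real_normed_field"
  assumes "summable (\<lambda>n. (-1)^n * b n)"
  shows "(\<lambda>n. (-1)^n * (b n - b (Suc n))) sums (2 * (\<Sum>n. (-1)^n * b n) - b 0)"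
proof -
  define f where "f n = (-1)^n * b n" for n
  have "f sums suminf f" using assms unfolding f_def by (simp add: summable_sums)
  moreover have "(\<lambda>n. f (Suc n)) sums (suminf f - b 0)"
    using calculation sums_Suc_iff[of f "suminf f - b 0"] by (simp add: f_def)
  ultimately have "(\<lambda>n. f n + f (Suc n)) sums (suminf f + (suminf f - b 0))"
    by (rule sums_add)
  then show ?thesis by (simp add: f_def[abs_def] algebra_simps)
qed

lemma eta_euler_Suc:
  assumes "Re s > 1 - real N"
  shows "eta_euler (Suc N) s = eta_euler N s"
proof -
  define b where "b n = iter_diff N (\<lambda>x. x powr (-s)) (of_nat (Suc n))" for n
  have "summable (\<lambda>n. (-1)^n * b n)"
    using summable_norm_cancel[OF summable_norm_euler_term[OF assms]]
    by (simp add: euler_term_def b_def)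
  from sums_alternating_diff[OF this]
  have "(\<lambda>n. (-1)^n * (b n - b (Suc n))) sums (2 * (\<Sum>n. (-1)^n * b n) - b 0)" .
  moreover have "(\<lambda>n. (-1)^n * (b n - b (Suc n))) = euler_term (Suc N) s"
    by (auto simp: euler_term_def b_def add.commute)
  ultimately have tail: "(\<Sum>n. euler_term (Suc N) s n)
                     = 2 * (\<Sum>n. euler_term N s n) - iter_diff N (\<lambda>x. x powr (-s)) 1"
    by (simp add: sums_iff euler_term_def b_def)
  show ?thesis unfolding eta_euler_def by (simp add: tail field_simps)
qed

lemma eta_euler_eq_alternating:
  assumes "Re s > 1"
  shows "eta_euler N s = (\<Sum>n. (-1)^n * of_nat (Suc n) powr (-s))"
proof (induction N)
  case 0
  then show ?case by (simp add: eta_euler_def euler_term_def)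
next
  case (Suc N)
  then show ?case using eta_euler_Suc[of N s] assms by simp
qed

lemma has_field_derivative_euler_term:
  "((\<lambda>s. euler_term N s n) has_field_derivative
      (-1)^n * iter_diff N (\<lambda>y. - (Ln y * y powr (-s))) (of_nat (Suc n))) (at s)"
proof -
  have "((\<lambda>s. y powr (-s)) has_field_derivative - (Ln y * y powr (-s))) (at s)"
    if "Re y > 0" for y :: complex
  proof -
    have "y \<noteq> 0" using that by auto
    from DERIV_chain2[OF has_field_derivative_powr_right[OF this] DERIV_minus[OF DERIV_ident]]
    show ?thesis by simp
  qed
  then have "((\<lambda>s. iter_diff N (\<lambda>x. x powr (-s)) y) has_field_derivative
                 iter_diff N (\<lambda>y. - (Ln y * y powr (-s))) y) (at s)" if "Re y > 0" for y
    using that by (rule has_field_derivative_iter_diff_param)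
  from DERIV_cmult[OF this, of "of_nat (Suc n)" "(-1)^n"]
  show ?thesis by (simp add: euler_term_def)
qed

lemma norm_euler_term_le_near:
  assumes "dist y x < d" and "1 - real N + 2 * d \<le> Re x"
  shows "norm (euler_term N y n) \<le> (\<Prod>i<N. norm x + d + real i) * real (Suc n) powr (- (1 + d))"
proof -
  have "Re x - Re y \<le> d"
    using complex_Re_le_cmod[of "x - y"] assms(1) by (simp add: dist_norm norm_minus_commute)
  then have Re_y: "Re y \<ge> 1 - real N + d" using assms(2) by simp
  have "d > 0" using assms(1) zero_le_dist[of y x] by linarith
  have "norm (euler_term N y n)
          \<le> (\<Prod>i<N. norm (- y - of_nat i)) * real (Suc n) powr (- Re y - real N)"
    by (rule norm_euler_term_le) (use Re_y \<open>d > 0\<close> in linarith)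
  also have "\<dots> \<le> (\<Prod>i<N. norm x + d + real i) * real (Suc n) powr (- (1 + d))"
  proof (rule mult_mono)
    show "(\<Prod>i<N. norm (- y - of_nat i)) \<le> (\<Prod>i<N. norm x + d + real i)"
    proof (rule prod_mono, rule conjI)
      fix i
      have "norm (- y - of_nat i) \<le> norm y + real i"
        using norm_triangle_ineq4[of "-y" "of_nat i"] by simp
      also have "norm y \<le> norm x + d"
        using norm_triangle_ineq2[of y x] assms(1) by (simp add: dist_norm)
      finally show "norm (- y - of_nat i) \<le> norm x + d + real i" by simp
    qed simp
    show "real (Suc n) powr (- Re y - real N) \<le> real (Suc n) powr (- (1 + d))"
      by (rule powr_mono) (use Re_y in auto)
  qed (use \<open>d > 0\<close> in \<open>auto intro!: prod_nonneg\<close>)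
  finally show ?thesis .
qed

lemma holomorphic_on_eta_euler: "eta_euler N holomorphic_on {s. Re s > 1 - real N}"
proof -
  define H where "H = {s. Re s > 1 - real N}"
  have "open H" unfolding H_def by (rule open_halfspace_Re_gt)
  have dominated: "\<exists>d h. 0 < d \<and> summable h \<and>
                     (\<forall>\<^sub>F n in sequentially. \<forall>y\<in>ball x d \<inter> H. norm (euler_term N y n) \<le> h n)"
    if "x \<in> H" for x
  proof -
    define d where "d = (Re x - (1 - real N)) / 2"
    have "d > 0" using that by (simp add: H_def d_def)
    have "1 - real N + 2 * d \<le> Re x" by (simp add: d_def field_simps)
    define h where "h n = (\<Prod>i<N. norm x + d + real i) * real (Suc n) powr (- (1 + d))" for n
    have "summable h"
      unfolding h_def using \<open>d > 0\<close> by (intro summable_mult summable_real_Suc_powr) simp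
    moreover have "norm (euler_term N y n) \<le> h n" if "y \<in> ball x d" for y n
      unfolding h_def using that \<open>1 - real N + 2 * d \<le> Re x\<close>
      by (intro norm_euler_term_le_near) (auto simp: dist_commute)
    ultimately show ?thesis using \<open>d > 0\<close> by (intro exI[of _ d] exI[of _ h]) auto
  qed
  obtain g g' where g: "\<And>x. x \<in> H \<Longrightarrow> euler_term N x sums g x \<and> (g has_field_derivative g' x) (at x)"
    using series_and_derivative_comparison_local[OF \<open>open H\<close> has_field_derivative_euler_term dominated]
    by metis
  have "g holomorphic_on H" using g \<open>open H\<close> by (auto simp: holomorphic_on_open)
  moreover have "(\<lambda>s. iter_diff k (\<lambda>x. x powr (-s)) 1) holomorphic_on H" for k
  proof -
    have "((\<lambda>s. iter_diff k (\<lambda>x. x powr (-s)) 1) has_field_derivative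
             iter_diff k (\<lambda>y. - (Ln y * y powr (-s))) 1) (at s)" for s
      using has_field_derivative_euler_term[of k 0 s] by (simp add: euler_term_def)
    then show ?thesis by (auto simp: holomorphic_on_open \<open>open H\<close>)
  qed
  ultimately have "(\<lambda>s. (\<Sum>k<N. (1/2)^(Suc k) * iter_diff k (\<lambda>x. x powr (-s)) 1)
                        + (1/2)^N * g s) holomorphic_on H"
    by (intro holomorphic_intros)
  then have "eta_euler N holomorphic_on H"
    by (rule holomorphic_transform) (use g in \<open>auto simp: eta_euler_def sums_iff\<close>)
  then show ?thesis by (simp add: H_def)
qed

lemma eta_euler_eq:
  assumes "M \<le> N" "Re s > 1 - real M"
  shows "eta_euler N s = eta_euler M s"
proof (rule analytic_continuation_open[of "{z. Re z > 1}" "{z. Re z > 1 - real M}"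
                                          "eta_euler N" "eta_euler M"])
  show "eta_euler N holomorphic_on {z. Re z > 1 - real M}"
    by (rule holomorphic_on_subset[OF holomorphic_on_eta_euler]) (use assms in auto)
qed (use assms eta_euler_eq_alternating in
      \<open>auto intro: open_halfspace_Re_gt convex_connected convex_halfspace_Re_gt
         holomorphic_on_eta_euler exI[of _ 2]\<close>)

lemma summable_nat_powr:
  assumes "Re s > 1"
  shows "summable (\<lambda>n. of_nat (Suc n) powr (-s) :: complex)"
proof (rule summable_norm_cancel, rule summable_comparison_test'[where N=0])
  show "summable (\<lambda>n. real (Suc n) powr (- Re s))"
    by (rule summable_real_Suc_powr) (use assms in simp)
  show "norm (norm (of_nat (Suc n) powr (-s) :: complex)) \<le> real (Suc n) powr (- Re s)" for n
    using norm_powr_real_powr[of "of_nat (Suc n)" "-s"] by simp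
qed

lemma suminf_alternating_nat_powr:
  assumes "Re s > 1"
  shows "(\<Sum>n. (-1)^n * of_nat (Suc n) powr (-s)) = (1 - 2 powr (1 - s)) * zeta_series s"
proof -
  define a where "a n = (of_nat (Suc n) powr (-s) :: complex)" for n
  define Z where "Z = zeta_series s"
  have "a sums suminf a"
    using summable_nat_powr[OF assms] unfolding a_def[abs_def] by (rule summable_sums)
  moreover have "suminf a = Z"
    unfolding Z_def zeta_series_def a_def by (simp only: powr_minus_divide)
  ultimately have "a sums Z" by simp
  define odd_part where "odd_part n = (if odd n then a n else 0)" for n
  have "odd_part sums (2 powr (-s) * Z)"
  proof -
    have "a (2 * m + 1) = 2 powr (-s) * a m" for m
    proof -
      have "a (2 * m + 1) = (2 * of_nat (Suc m)) powr (-s)" by (simp add: a_def)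
      also have "\<dots> = 2 powr (-s) * a m" unfolding a_def by (rule powr_times_real) auto
      finally show ?thesis .
    qed
    then have "(\<lambda>m. odd_part (2 * m + 1)) sums (2 powr (-s) * Z)"
      using sums_mult[OF \<open>a sums Z\<close>, of "2 powr (-s)"] by (simp add: odd_part_def)
    moreover have "strict_mono (\<lambda>m::nat. 2 * m + 1)" by (auto simp: strict_mono_def)
    moreover have "odd_part n = 0" if "n \<notin> range (\<lambda>m::nat. 2 * m + 1)" for n
      using that unfolding odd_part_def by (metis odd_two_times_div_two_succ rangeI)
    ultimately show ?thesis using sums_mono_reindex by blast
  qed
  from sums_diff[OF \<open>a sums Z\<close> sums_mult[OF this, of 2]]
  have "(\<lambda>n. a n - 2 * odd_part n) sums (Z - 2 * (2 powr (-s) * Z))" .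
  moreover have "(\<lambda>n. a n - 2 * odd_part n) = (\<lambda>n. (-1)^n * a n)"
    by (simp add: fun_eq_iff odd_part_def minus_one_power_iff)
  ultimately have "(\<Sum>n. (-1)^n * a n) = Z - 2 * (2 powr (-s) * Z)"
    by (simp add: sums_iff)
  also have "\<dots> = (1 - 2 powr (1 - s)) * Z"
    using powr_add[of 2 1 "-s"] by (simp add: algebra_simps)
  finally show ?thesis by (simp add: a_def Z_def)
qed

text \<open>Any N with Re s > 1 - N would do, by eta_euler_eq.\<close>
definition eta_entire :: "complex \<Rightarrow> complex" where
  "eta_entire s = eta_euler (nat \<lceil>1 - Re s\<rceil> + 1) s"

lemma eta_entire_eq_eta_euler:
  assumes "Re s > 1 - real N"
  shows "eta_entire s = eta_euler N s"
proof -
  define M where "M = nat \<lceil>1 - Re s\<rceil> + 1"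
  have "Re s > 1 - real M"
    using le_of_int_ceiling[of "1 - Re s"] by (simp add: M_def) linarith
  then show ?thesis
    using eta_euler_eq[of M N s] eta_euler_eq[of N M s] assms
    by (cases "M \<le> N") (auto simp: eta_entire_def M_def)
qed

lemma holomorphic_on_eta_entire: "eta_entire holomorphic_on UNIV"
proof -
  have "eta_entire holomorphic_on (\<Union>N. {s. Re s > 1 - real N})"
  proof (rule holomorphic_on_UN_open)
    fix N :: nat
    show "open {s. Re s > 1 - real N}" by (rule open_halfspace_Re_gt)
    show "eta_entire holomorphic_on {s. Re s > 1 - real N}"
      by (rule holomorphic_transform[OF holomorphic_on_eta_euler]) (simp add: eta_entire_eq_eta_euler)
  qed
  moreover have "\<exists>N. Re s > 1 - real N" for s
  proof -
    obtain N where "1 - Re s < real N" using reals_Archimedean2 by blast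
    then show ?thesis by (intro exI[of _ N]) linarith
  qed
  then have "(\<Union>N. {s. Re s > 1 - real N}) = UNIV" by blast
  ultimately show ?thesis by simp
qed

lemma factor_zeta_eq_eta_entire: "factor_zeta = eta_entire"
  unfolding factor_zeta_def
proof (rule the_equality)
  have eta_entire_zeta: "eta_entire s = (1 - 2 powr (1 - s)) * zeta_series s" if "Re s > 1" for s
    using that eta_entire_eq_eta_euler[of 0 s] eta_euler_eq_alternating[of s 0]
      suminf_alternating_nat_powr[of s] by simp
  then show "eta_entire holomorphic_on UNIV \<and>
               (\<forall>s. 1 < Re s \<longrightarrow> eta_entire s = (1 - 2 powr (1 - s)) * zeta_series s)"
    using holomorphic_on_eta_entire by blast
  fix f
  assume f: "f holomorphic_on UNIV \<and>
               (\<forall>s. 1 < Re s \<longrightarrow> f s = (1 - 2 powr (1 - s)) * zeta_series s)"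
  show "f = eta_entire"
  proof
    fix z
    show "f z = eta_entire z"
      by (rule analytic_continuation_open[of "{s. Re s > 1}" UNIV])
         (use f eta_entire_zeta holomorphic_on_eta_entire in
           \<open>auto intro: open_halfspace_Re_gt exI[of _ 2]\<close>)
  qed
qed

text \<open>The partial sums differ from those of the once Euler-transformed series, which converges
  for Re u > 0, by a term tending to 0.\<close>
lemma alternating_nat_powr_tendsto_factor_zeta:
  assumes u: "Re u > 0"
  shows "(\<lambda>N. \<Sum>n<N. (-1)^n * of_nat (Suc n) powr (-u)) \<longlonglongrightarrow> factor_zeta u"
proof -
  define a where "a N = (of_nat (Suc N) powr (-u) :: complex)" for N
  define E where "E N = (\<Sum>n<N. (-1)^n * a n)" for N
  define P where "P N = (\<Sum>n<N. euler_term 1 u n)" for N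
  have partial_sums: "E N = (P N + 1 - (-1)^N * a N) / 2" for N
  proof -
    have "P N = 2 * E N + (-1)^N * a N - 1"
      by (induction N) (simp_all add: P_def E_def a_def euler_term_def algebra_simps add.commute)
    then show ?thesis by simp
  qed
  have "P \<longlonglongrightarrow> (\<Sum>n. euler_term 1 u n)"
    unfolding P_def using summable_norm_cancel[OF summable_norm_euler_term[of 1 u]] u
    by (intro summable_LIMSEQ) simp
  moreover have "(\<lambda>N. (-1)^N * a N) \<longlonglongrightarrow> 0"
  proof (rule tendsto_norm_zero_cancel)
    have "filterlim (\<lambda>N. real (Suc N)) at_top sequentially"
      using filterlim_sequentially_Suc[of real at_top] filterlim_real_sequentially by simp
    then have "(\<lambda>N. real (Suc N) powr (- Re u)) \<longlonglongrightarrow> 0"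
      using tendsto_neg_powr[of "- Re u" "\<lambda>N. real (Suc N)" sequentially] u by simp
    moreover have "norm ((-1)^N * a N) = real (Suc N) powr (- Re u)" for N
      using norm_powr_real_powr[of "of_nat (Suc N)" "-u"] by (simp add: a_def norm_mult norm_power)
    ultimately show "(\<lambda>N. norm ((-1)^N * a N)) \<longlonglongrightarrow> 0" by simp
  qed
  ultimately have "E \<longlonglongrightarrow> ((\<Sum>n. euler_term 1 u n) + 1 - 0) / 2"
    unfolding partial_sums by (intro tendsto_intros) auto
  moreover have "((\<Sum>n. euler_term 1 u n) + 1 - 0) / 2 = factor_zeta u"
    using eta_entire_eq_eta_euler[of 1 u] u by (simp add: factor_zeta_eq_eta_entire eta_euler_def)
  ultimately have "E \<longlonglongrightarrow> factor_zeta u" by simp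
  then show ?thesis unfolding E_def[abs_def] a_def .
qed

lemma has_integral_stretch_Ioi:
  fixes f :: "real \<Rightarrow> 'a::euclidean_space"
  assumes "f absolutely_integrable_on {0<..}" and "c > 0"
  shows "((\<lambda>x. f (c * x)) has_integral integral {0<..} f /\<^sub>R c) {0<..}"
proof -
  define F where "F = (\<lambda>x::real. indicator {0<..} x *\<^sub>R f x)"
  have "has_bochner_integral lebesgue F (integral\<^sup>L lebesgue F)"
    using assms(1) by (intro has_bochner_integral_integrable) (simp add: set_integrable_def F_def)
  then have "has_bochner_integral lebesgue (\<lambda>x. F (0 + c * x)) (integral\<^sup>L lebesgue F /\<^sub>R c)"
    using has_bochner_integral_lebesgue_real_affine_iff[of c F _ 0] assms(2) by simp
  moreover have "F (0 + c * x) = indicator {0<..} x *\<^sub>R f (c * x)" for x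
    using assms(2) by (simp add: F_def indicator_def zero_less_mult_iff)
  ultimately have stretched:
    "has_bochner_integral lebesgue (\<lambda>x. indicator {0<..} x *\<^sub>R f (c * x)) (integral\<^sup>L lebesgue F /\<^sub>R c)"
    by simp
  then have "set_integrable lebesgue {0<..} (\<lambda>x. f (c * x))"
    unfolding set_integrable_def by (simp add: integrable.intros)
  from has_integral_set_lebesgue[OF this] stretched
  have "((\<lambda>x. f (c * x)) has_integral integral\<^sup>L lebesgue F /\<^sub>R c) {0<..}"
    by (simp add: set_lebesgue_integral_def has_bochner_integral_iff)
  moreover have "integral\<^sup>L lebesgue F = integral {0<..} f"
    using set_lebesgue_integral_eq_integral(2)[OF assms(1)]
    by (simp add: set_lebesgue_integral_def F_def)
  ultimately show ?thesis by simp
qed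

lemma has_integral_powr_exp:
  assumes "Re u > 0" and "c > 0"
  shows "((\<lambda>x. of_real x powr u * of_real (exp (- (c * x)))) has_integral
           Gamma (u + 1) * of_real c powr (- (u + 1))) {0<..}"
proof -
  define f where "f = (\<lambda>t::real. of_real t powr u / of_real (exp t))"
  have "(f has_integral Gamma (u + 1)) {0<..}"
    using Gamma_integral_complex'[of "u + 1"] assms(1) by (simp add: f_def)
  moreover have "f absolutely_integrable_on {0<..}"
    using absolutely_integrable_Gamma_integral'[of "u + 1"] assms(1) by (simp add: f_def)
  ultimately have "((\<lambda>x. f (c * x)) has_integral Gamma (u + 1) / of_real c) {0<..}"
    using has_integral_stretch_Ioi[of f c] assms(2)
    by (simp add: integral_unique scaleR_conv_of_real divide_inverse mult.commute)
  then have "((\<lambda>x. of_real c powr (-u) * f (c * x)) has_integral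
               of_real c powr (-u) * (Gamma (u + 1) / of_real c)) {0<..}"
    by (rule has_integral_mult_right)
  moreover have "of_real c powr (-u) * f (c * x) = of_real x powr u * of_real (exp (- (c * x)))"
    if "x > 0" for x
  proof -
    have "of_real (c * x) powr u = of_real c powr u * (of_real x powr u :: complex)"
      using powr_times_real[of c x u] that assms(2) by simp
    moreover have "of_real c powr (-u) * of_real c powr u = (1 :: complex)"
      using assms(2) by (simp add: powr_minus)
    ultimately show ?thesis by (simp add: f_def exp_minus field_simps)
  qed
  moreover have "of_real c powr (-u) * (Gamma (u + 1) / of_real c)
                   = Gamma (u + 1) * of_real c powr (- (u + 1))"
    using powr_add[of "of_real c" "-u" "-1"] assms(2) by (simp add: powr_minus_divide)
  ultimately show ?thesis by (metis (no_types, lifting) greaterThan_iff has_integral_eq)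
qed

definition logistic_density :: "real \<Rightarrow> real" where
  "logistic_density x = exp (-x) / (1 + exp (-x))^2"

definition logistic_partial :: "nat \<Rightarrow> real \<Rightarrow> real" where
  "logistic_partial N x = (\<Sum>n<N. (-1)^n * real (Suc n) * exp (- (real (Suc n) * x)))"

lemma square_one_minus_mult_sum_Suc_power:
  fixes y :: "'a::comm_ring_1"
  shows "(1 - y)^2 * (\<Sum>n<N. of_nat (Suc n) * y^n)
           = 1 - of_nat (N + 1) * y^N + of_nat N * y^(N + 1)"
  by (induction N) (simp_all add: algebra_simps power2_eq_square)

lemma logistic_partial_closed_form:
  "logistic_partial N x
     = exp (-x) * (1 - real (N + 1) * (- exp (-x))^N + real N * (- exp (-x))^(N + 1))
       / (1 + exp (-x))^2"
proof -
  define q where "q = exp (-x)"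
  have exp_q: "exp (- (real (Suc n) * x)) = q ^ Suc n" for n
    using exp_of_nat_mult[of "Suc n" "-x"] by (simp add: q_def)
  have "logistic_partial N x = (\<Sum>n<N. q * (real (Suc n) * (-q)^n))"
    unfolding logistic_partial_def
    by (intro sum.cong refl) (simp only: exp_q power_minus[of q] power_Suc, simp only: mult_ac)
  also have "\<dots> = q * (\<Sum>n<N. real (Suc n) * (-q)^n)" by (simp add: sum_distrib_left)
  also have "(\<Sum>n<N. real (Suc n) * (-q)^n)
               = (1 - real (N + 1) * (-q)^N + real N * (-q)^(N + 1)) / (1 + q)^2"
  proof -
    have "q > 0" by (simp add: q_def)
    then have "(1 + q)^2 \<noteq> 0" by simp
    with square_one_minus_mult_sum_Suc_power[of "-q" N] show ?thesis
      by (simp add: field_simps)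
  qed
  finally show ?thesis by (simp add: q_def)
qed

lemma of_nat_mult_exp_power_le:
  assumes "x > 0"
  shows "real N * exp (-x) ^ N \<le> 1 / x"
proof (cases "N = 0")
  case False
  define E where "E = exp (real N * x)"
  have "exp (-x) ^ N = inverse E"
    unfolding E_def by (simp only: exp_minus power_inverse exp_of_nat_mult)
  then have "real N * exp (-x) ^ N = real N / E" by (simp add: divide_inverse)
  also have "\<dots> \<le> real N / (real N * x)"
  proof (rule divide_left_mono)
    show "real N * x \<le> E"
      using exp_ge_add_one_self[of "real N * x"] unfolding E_def by linarith
  qed (use False assms in \<open>auto simp: E_def\<close>)
  also have "\<dots> = 1 / x" using False by simp
  finally show ?thesis .
qed (use assms in simp)

lemma abs_logistic_partial_le:
  assumes "x > 0"
  shows "\<bar>logistic_partial N x\<bar> \<le> exp (-x) * (2 + 2 / x)"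
proof -
  define q where "q = exp (-x)"
  have q: "0 < q" "q \<le> 1" using assms by (auto simp: q_def)
  define A where "A = 1 - real (N + 1) * (-q)^N + real N * (-q)^(N + 1)"
  have "\<bar>A\<bar> \<le> 1 + \<bar>real (N + 1) * (-q)^N\<bar> + \<bar>real N * (-q)^(N + 1)\<bar>"
    unfolding A_def by linarith
  also have "\<dots> = 1 + real (N + 1) * q^N + real N * q^(N + 1)"
    using q by (simp add: abs_mult power_abs)
  also have "\<dots> \<le> 1 + (1 / x + 1) + 1 / x"
  proof -
    have "real (N + 1) * q^N = real N * q^N + q^N" by (simp add: algebra_simps)
    moreover have "real N * q^(N + 1) \<le> real N * q^N"
      using q by (intro mult_left_mono) (auto intro: mult_left_le_one_le)
    moreover have "real N * q ^ N \<le> 1 / x" "q ^ N \<le> 1"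
      using of_nat_mult_exp_power_le[OF assms] q by (auto simp: q_def power_le_one)
    ultimately show ?thesis by linarith
  qed
  finally have "\<bar>A\<bar> \<le> 2 + 2 / x" by simp
  have "\<bar>logistic_partial N x\<bar> = q * \<bar>A\<bar> / (1 + q)^2"
    unfolding logistic_partial_closed_form q_def[symmetric] A_def using q by (simp add: abs_mult)
  also have "\<dots> \<le> q * \<bar>A\<bar> / 1"
    using q by (intro divide_left_mono) auto
  also have "\<dots> \<le> q * (2 + 2 / x)"
    using \<open>\<bar>A\<bar> \<le> 2 + 2 / x\<close> q by (simp add: mult_left_mono)
  finally show ?thesis by (simp add: q_def)
qed

lemma logistic_partial_tendsto:
  assumes "x > 0"
  shows "(\<lambda>N. logistic_partial N x) \<longlonglongrightarrow> logistic_density x"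
proof -
  define q where "q = exp (-x)"
  have "0 < q" "q < 1" using assms by (simp_all add: q_def)
  then have "norm (-q) < 1" "1 + q \<noteq> 0" by simp_all
  have "(\<lambda>N. q * (1 - (real N * (-q)^N + (-q)^N) + (-q) * (real N * (-q)^N)) / (1 + q)^2)
          \<longlonglongrightarrow> q * (1 - (0 + 0) + (-q) * 0) / (1 + q)^2"
    using powser_times_n_limit_0[OF \<open>norm (-q) < 1\<close>] LIMSEQ_power_zero[OF \<open>norm (-q) < 1\<close>]
    using \<open>norm (-q) < 1\<close> \<open>1 + q \<noteq> 0\<close> by (intro tendsto_intros) auto
  then show ?thesis
    unfolding logistic_partial_closed_form logistic_density_def q_def[symmetric]
    by (simp add: algebra_simps)
qed

lemma has_integral_powr_logistic_partial:
  assumes "Re u > 0"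
  shows "((\<lambda>x. of_real x powr u * of_real (logistic_partial N x)) has_integral
           Gamma (u + 1) * (\<Sum>n<N. (-1)^n * of_nat (Suc n) powr (-u))) {0<..}"
proof -
  define c where "c n = ((-1)^n * of_nat (Suc n) :: complex)" for n
  have "((\<lambda>x. \<Sum>n<N. c n * (of_real x powr u * of_real (exp (- (real (Suc n) * x)))))
          has_integral (\<Sum>n<N. c n * (Gamma (u + 1) * of_real (real (Suc n)) powr (- (u + 1)))))
          {0<..}"
    using assms by (intro has_integral_sum finite_lessThan has_integral_mult_right has_integral_powr_exp) auto
  moreover have "(\<Sum>n<N. c n * (Gamma (u + 1) * of_real (real (Suc n)) powr (- (u + 1))))
                   = Gamma (u + 1) * (\<Sum>n<N. (-1)^n * of_nat (Suc n) powr (-u))"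
    unfolding sum_distrib_left
  proof (rule sum.cong[OF refl])
    fix n
    have "(of_nat (Suc n) :: complex) * of_nat (Suc n) powr (- (u + 1)) = of_nat (Suc n) powr (-u)"
      using powr_add[of "of_nat (Suc n) :: complex" 1 "- (u + 1)"] by simp
    then show "c n * (Gamma (u + 1) * of_real (real (Suc n)) powr (- (u + 1)))
                 = Gamma (u + 1) * ((-1)^n * of_nat (Suc n) powr (-u))"
      by (simp add: c_def mult_ac)
  qed
  moreover have "(\<Sum>n<N. c n * (of_real x powr u * of_real (exp (- (real (Suc n) * x)))))
                   = of_real x powr u * of_real (logistic_partial N x)" for x
    unfolding logistic_partial_def of_real_sum sum_distrib_left
    by (intro sum.cong refl) (simp add: c_def)
  ultimately show ?thesis by simp
qed

lemma integrable_powr_exp: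
  fixes a :: real
  assumes "a > -1"
  shows "(\<lambda>x. x powr a * exp (-x)) integrable_on {0<..}"
proof -
  have "(\<lambda>x. complex_of_real x powr (of_real (a + 1) - 1) / of_real (exp x))
          absolutely_integrable_on {0<..}"
    using assms by (intro absolutely_integrable_Gamma_integral') simp
  then have "(\<lambda>x. norm (complex_of_real x powr (of_real a) / of_real (exp x))) integrable_on {0<..}"
    by (simp add: absolutely_integrable_on_def)
  then show ?thesis
    by (rule integrable_eq) (simp add: norm_divide norm_powr_real_powr exp_minus field_simps)
qed

lemma integral_powr_logistic_density_limit:
  assumes u: "Re u > 0"
  shows "(\<lambda>x. of_real x powr u * of_real (logistic_density x)) integrable_on {0<..}"
    and "(\<lambda>N. Gamma (u + 1) * (\<Sum>n<N. (-1)^n * of_nat (Suc n) powr (-u)))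
           \<longlonglongrightarrow> integral {0<..} (\<lambda>x. of_real x powr u * of_real (logistic_density x))"
proof -
  define h where "h x = 2 * (x powr Re u * exp (-x)) + 2 * (x powr (Re u - 1) * exp (-x))" for x
  have "(\<lambda>x. x powr Re u * exp (-x)) integrable_on {0<..}"
       "(\<lambda>x. x powr (Re u - 1) * exp (-x)) integrable_on {0<..}"
    using u by (auto intro: integrable_powr_exp)
  then have h_integrable: "h integrable_on {0<..}"
    using integrable_cmul[of _ "{0<..}" 2] unfolding h_def by (intro integrable_add) auto
  have dominated: "norm (of_real x powr u * of_real (logistic_partial N x)) \<le> h x"
    if "x \<in> {0<..}" for N x
  proof -
    have "x > 0" using that by simp
    have "norm (of_real x powr u * of_real (logistic_partial N x))
            = x powr Re u * \<bar>logistic_partial N x\<bar>"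
      using \<open>x > 0\<close> by (simp add: norm_mult norm_powr_real_powr)
    also have "\<dots> \<le> x powr Re u * (exp (-x) * (2 + 2 / x))"
      using abs_logistic_partial_le[OF \<open>x > 0\<close>] by (simp add: mult_left_mono)
    also have "\<dots> = h x"
      using \<open>x > 0\<close> unfolding h_def powr_diff by (simp add: field_simps)
    finally show ?thesis .
  qed
  have pointwise: "(\<lambda>N. of_real x powr u * of_real (logistic_partial N x))
                   \<longlonglongrightarrow> of_real x powr u * of_real (logistic_density x)"
    if "x \<in> {0<..}" for x
    using that by (intro tendsto_intros logistic_partial_tendsto) auto
  have "(\<lambda>x. of_real x powr u * of_real (logistic_partial N x)) integrable_on {0<..}" for N
    using has_integral_powr_logistic_partial[OF u] by blast
  note limit = dominated_convergence[OF this h_integrable dominated pointwise]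
  show "(\<lambda>x. of_real x powr u * of_real (logistic_density x)) integrable_on {0<..}"
    by (rule limit(1))
  show "(\<lambda>N. Gamma (u + 1) * (\<Sum>n<N. (-1)^n * of_nat (Suc n) powr (-u)))
           \<longlonglongrightarrow> integral {0<..} (\<lambda>x. of_real x powr u * of_real (logistic_density x))"
    using limit(2) has_integral_powr_logistic_partial[OF u, THEN integral_unique] by simp
qed

lemma has_integral_powr_logistic_density:
  assumes "Re u > 0"
  shows "((\<lambda>x. of_real x powr u * of_real (logistic_density x))
           has_integral factor_zeta u * Gamma (u + 1)) {0<..}"
proof -
  have "(\<lambda>N. Gamma (u + 1) * (\<Sum>n<N. (-1)^n * of_nat (Suc n) powr (-u)))
          \<longlonglongrightarrow> Gamma (u + 1) * factor_zeta u"
    using alternating_nat_powr_tendsto_factor_zeta[OF assms] by (intro tendsto_intros)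
  with integral_powr_logistic_density_limit(2)[OF assms]
  have "integral {0<..} (\<lambda>x. of_real x powr u * of_real (logistic_density x))
          = factor_zeta u * Gamma (u + 1)"
    using LIMSEQ_unique by (simp add: mult.commute)
  with integral_powr_logistic_density_limit(1)[OF assms] show ?thesis
    by (metis integrable_integral)
qed

lemma logistic_density_nonneg: "logistic_density x \<ge> 0"
  by (simp add: logistic_density_def)

lemma powr_add_cnj:
  assumes "x > 0"
  shows "complex_of_real x powr (a + cnj b) = of_real x powr a * cnj (of_real x powr b)"
  using cnj_powr[of "of_real x" b] assms by (simp add: powr_add)

lemma has_integral_complex_nonneg:
  fixes f :: "'a::euclidean_space \<Rightarrow> complex"
  assumes "(f has_integral I) S" and "\<And>x. x \<in> S \<Longrightarrow> f x \<ge> 0"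
  shows "I \<ge> 0"
proof -
  have "((\<lambda>x. Re (f x)) has_integral Re I) S" "((\<lambda>x. Im (f x)) has_integral Im I) S"
    using has_integral_linear[OF assms(1) bounded_linear_Re]
      has_integral_linear[OF assms(1) bounded_linear_Im] by (simp_all add: o_def)
  moreover have "Re (f x) \<ge> 0" "Im (f x) = 0" if "x \<in> S" for x
    using assms(2)[OF that] by (simp_all add: less_eq_complex_def)
  ultimately have "Re I \<ge> 0" "((\<lambda>x. 0) has_integral Im I) S"
    by (metis has_integral_nonneg, metis has_integral_eq)
  then show ?thesis
    using has_integral_unique[OF _ has_integral_0] by (auto simp: less_eq_complex_def)
qed

lemma psd_matrix_const_one: "psd_matrix n (\<lambda>j k. 1)"
  unfolding psd_matrix_def
proof
  fix z :: "nat \<Rightarrow> complex"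
  have "(\<Sum>j=1..n. \<Sum>k=1..n. 1 * z j * cnj (z k)) = (\<Sum>j=1..n. z j) * cnj (\<Sum>k=1..n. z k)"
    by (simp add: sum_distrib_left sum_distrib_right, rule sum.swap)
  also have "\<dots> = of_real ((norm (\<Sum>j=1..n. z j))\<^sup>2)" by (rule complex_norm_square[symmetric])
  finally show "(\<Sum>j=1..n. \<Sum>k=1..n. 1 * z j * cnj (z k)) \<ge> 0"
    by (simp add: less_eq_complex_def)
qed

text \<open>A Schur product step: for each x the integrand below is the quadratic form of P at the
  vector (z j * f j x), weighted by w x \<ge> 0.\<close>
lemma psd_matrix_mult_integral:
  fixes f :: "nat \<Rightarrow> 'a::euclidean_space \<Rightarrow> complex" and w :: "'a \<Rightarrow> real"
  assumes "psd_matrix n P"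
    and "\<And>j k. j \<in> {1..n} \<Longrightarrow> k \<in> {1..n} \<Longrightarrow>
           ((\<lambda>x. f j x * cnj (f k x) * of_real (w x)) has_integral A j k) S"
    and "\<And>x. x \<in> S \<Longrightarrow> w x \<ge> 0"
  shows "psd_matrix n (\<lambda>j k. P j k * A j k)"
  unfolding psd_matrix_def
proof
  fix z :: "nat \<Rightarrow> complex"
  define g where "g x = (\<Sum>j=1..n. \<Sum>k=1..n. P j k * (z j * f j x) * cnj (z k * f k x)) * of_real (w x)"
    for x
  have "(g has_integral (\<Sum>j=1..n. \<Sum>k=1..n. P j k * A j k * z j * cnj (z k))) S"
  proof -
    have "((\<lambda>x. \<Sum>j=1..n. \<Sum>k=1..n. (P j k * z j * cnj (z k)) * (f j x * cnj (f k x) * of_real (w x)))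
            has_integral (\<Sum>j=1..n. \<Sum>k=1..n. (P j k * z j * cnj (z k)) * A j k)) S"
      using assms(2) by (intro has_integral_sum finite_atLeastAtMost has_integral_mult_right) auto
    then show ?thesis
      unfolding g_def sum_distrib_right by (simp add: mult_ac)
  qed
  moreover have "g x \<ge> 0" if "x \<in> S" for x
  proof -
    have "(\<Sum>j=1..n. \<Sum>k=1..n. P j k * (z j * f j x) * cnj (z k * f k x)) \<ge> 0"
      using assms(1) unfolding psd_matrix_def by (rule spec[of _ "\<lambda>j. z j * f j x"])
    moreover have "complex_of_real (w x) \<ge> 0"
      using assms(3)[OF that] by (simp add: less_eq_complex_def)
    ultimately show ?thesis unfolding g_def by (rule mult_nonneg_nonneg)
  qed
  ultimately show "(\<Sum>j=1..n. \<Sum>k=1..n. P j k * A j k * z j * cnj (z k)) \<ge> 0"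
    by (rule has_integral_complex_nonneg)
qed

lemma psd_matrix_prod_integrals:
  fixes f :: "nat \<Rightarrow> nat \<Rightarrow> 'a::euclidean_space \<Rightarrow> complex" and w :: "'a \<Rightarrow> real"
  assumes "\<And>l j k. l \<in> {1..m} \<Longrightarrow> j \<in> {1..n} \<Longrightarrow> k \<in> {1..n} \<Longrightarrow>
             ((\<lambda>x. f l j x * cnj (f l k x) * of_real (w x)) has_integral A l j k) S"
    and "\<And>x. x \<in> S \<Longrightarrow> w x \<ge> 0"
  shows "psd_matrix n (\<lambda>j k. \<Prod>l=1..m. A l j k)"
  using assms(1)
proof (induction m)
  case 0
  show ?case using psd_matrix_const_one by simp
next
  case (Suc m)
  have "psd_matrix n (\<lambda>j k. \<Prod>l=1..m. A l j k)" using Suc by simp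
  moreover have "((\<lambda>x. f (Suc m) j x * cnj (f (Suc m) k x) * of_real (w x)) has_integral A (Suc m) j k) S"
    if "j \<in> {1..n}" "k \<in> {1..n}" for j k
    using Suc.prems that by simp
  ultimately have "psd_matrix n (\<lambda>j k. (\<Prod>l=1..m. A l j k) * A (Suc m) j k)"
    using assms(2) by (rule psd_matrix_mult_integral)
  then show ?case by (simp add: prod.nat_ivl_Suc')
qed

theorem mainTheorem9:
  fixes m n :: nat and s :: "nat \<Rightarrow> nat \<Rightarrow> complex"
  assumes "\<And>j l. 1 \<le> j \<Longrightarrow> j \<le> n \<Longrightarrow> 1 \<le> l \<Longrightarrow> l \<le> m \<Longrightarrow> Re (s j l) > 0"
  shows "psd_matrix n (\<lambda>j k. \<Prod>l=1..m.
            factor_zeta (s j l + cnj (s k l)) * Gamma (s j l + cnj (s k l) + 1))"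
proof (rule psd_matrix_prod_integrals)
  fix l j k
  assume "l \<in> {1..m}" "j \<in> {1..n}" "k \<in> {1..n}"
  then have "Re (s j l + cnj (s k l)) > 0" using assms by (simp add: add_pos_pos)
  from has_integral_powr_logistic_density[OF this]
  show "((\<lambda>x. of_real x powr s j l * cnj (of_real x powr s k l) * of_real (logistic_density x))
           has_integral factor_zeta (s j l + cnj (s k l)) * Gamma (s j l + cnj (s k l) + 1)) {0<..}"
    by (rule has_integral_eq[rotated]) (simp add: powr_add_cnj)
qed (rule logistic_density_nonneg)

end
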